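(* Let $\Gamma$ be a cubic distance-regular graph with at least $10$ vertices and let $(u_{ij})$ be the generators of $C(G_{aut}^+(\Gamma))$. Then $u_{ij}u_{kl}=u_{kl}u_{ij}$ for all vertices $i,j,k,l$ with $d(i,k)=d(j,l)\le2$.
   Context: A connected regular graph $\Gamma=(V,E)$ of diameter $D$ is distance-regular with intersection array $\{b_0,\dots,b_{D-1};c_1,\dots,c_D\}$ if for any vertices $v,w$ with $d(v,w)=i$, exactly $b_i$ neighbors of $w$ are at distance $i+1$ from $v$ and exactly $c_i$ neighbors of $w$ are at distance $i-1$ from $v$ ($d$ the graph distance). Cubic means $3$-regular. $C(G_{aut}^+(\Gamma))$ is the universal unital $C^*$-algebra generated by $u_{ij}$, $i,j\in V=\{1,\dots,n\}$, with relations: (R1) $u_{ij}=u_{ij}^*=u_{ij}^2$; (R2) $\sum_{l} u_{il}=1=\sum_{l} u_{li}$ for all $i$; (R3) $u_{ij}u_{kl}=u_{kl}u_{ij}=0$ whenever exactly one of $(i,k)\in E$, $(j,l)\in E$ holds. *)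

theory Defs
  imports Complex_Main
begin

definition cstar_algebra ::
  "(complex \<Rightarrow> 'a::ring_1 \<Rightarrow> 'a) \<Rightarrow> ('a \<Rightarrow> real) \<Rightarrow> ('a \<Rightarrow> 'a) \<Rightarrow> bool" where
  "cstar_algebra sc nm st \<longleftrightarrow>
     (\<forall>x. sc 1 x = x) \<and>
     (\<forall>a b x. sc a (sc b x) = sc (a * b) x) \<and>
     (\<forall>a x y. sc a (x + y) = sc a x + sc a y) \<and>
     (\<forall>a b x. sc (a + b) x = sc a x + sc b x) \<and>
     (\<forall>a x y. sc a (x * y) = sc a x * y \<and> sc a (x * y) = x * sc a y) \<and>
     (\<forall>x. 0 \<le> nm x) \<and>
     (\<forall>x. nm x = 0 \<longleftrightarrow> x = 0) \<and>
     (\<forall>x y. nm (x + y) \<le> nm x + nm y) \<and>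
     (\<forall>a x. nm (sc a x) = cmod a * nm x) \<and>
     (\<forall>x y. nm (x * y) \<le> nm x * nm y) \<and>
     (\<forall>X :: nat \<Rightarrow> 'a.
        (\<forall>e>0. \<exists>N. \<forall>m\<ge>N. \<forall>n\<ge>N. nm (X m - X n) < e) \<longrightarrow>
        (\<exists>L. \<forall>e>0. \<exists>N. \<forall>n\<ge>N. nm (X n - L) < e)) \<and>
     (\<forall>x. st (st x) = x) \<and>
     (\<forall>x y. st (x + y) = st x + st y) \<and>
     (\<forall>a x. st (sc a x) = sc (cnj a) (st x)) \<and>
     (\<forall>x y. st (x * y) = st y * st x) \<and>
     (\<forall>x. nm (st x * x) = (nm x)\<^sup>2)"

definition simple_graph :: "'v set \<Rightarrow> ('v \<Rightarrow> 'v \<Rightarrow> bool) \<Rightarrow> bool" where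
  "simple_graph V E \<longleftrightarrow> finite V \<and> (\<forall>x y. E x y \<longrightarrow> x \<in> V \<and> y \<in> V) \<and>
     (\<forall>x y. E x y \<longrightarrow> E y x) \<and> (\<forall>x. \<not> E x x)"

definition connected_graph :: "'v set \<Rightarrow> ('v \<Rightarrow> 'v \<Rightarrow> bool) \<Rightarrow> bool" where
  "connected_graph V E \<longleftrightarrow> (\<forall>x\<in>V. \<forall>y\<in>V. \<exists>n. (E ^^ n) x y)"

definition gdist :: "('v \<Rightarrow> 'v \<Rightarrow> bool) \<Rightarrow> 'v \<Rightarrow> 'v \<Rightarrow> nat" where
  "gdist E x y = (LEAST n. (E ^^ n) x y)"

definition cubic :: "'v set \<Rightarrow> ('v \<Rightarrow> 'v \<Rightarrow> bool) \<Rightarrow> bool" where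
  "cubic V E \<longleftrightarrow> (\<forall>x\<in>V. card {y. E x y} = 3)"

definition distance_regular :: "'v set \<Rightarrow> ('v \<Rightarrow> 'v \<Rightarrow> bool) \<Rightarrow> bool" where
  "distance_regular V E \<longleftrightarrow> simple_graph V E \<and> connected_graph V E \<and>
     (\<exists>k. \<forall>x\<in>V. card {y. E x y} = k) \<and>
     (\<exists>b c :: nat \<Rightarrow> nat. \<forall>v\<in>V. \<forall>w\<in>V.
        card {x. E w x \<and> gdist E v x = gdist E v w + 1} = b (gdist E v w) \<and>
        card {x. E w x \<and> gdist E v x + 1 = gdist E v w} = c (gdist E v w))"

text \<open>u is a family of elements of a C*-algebra satisfying the defining
relations (R1)-(R3) of C(G_aut^+(Gamma)).\<close>
definition qaut_rel ::
  "'v set \<Rightarrow> ('v \<Rightarrow> 'v \<Rightarrow> bool) \<Rightarrow> ('a \<Rightarrow> 'a) \<Rightarrow> ('v \<Rightarrow> 'v \<Rightarrow> 'a::ring_1) \<Rightarrow> bool" where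
  "qaut_rel V E st u \<longleftrightarrow>
     (\<forall>i\<in>V. \<forall>j\<in>V. u i j = st (u i j) \<and> u i j = u i j * u i j) \<and>
     (\<forall>i\<in>V. (\<Sum>l\<in>V. u i l) = 1 \<and> (\<Sum>l\<in>V. u l i) = 1) \<and>
     (\<forall>i\<in>V. \<forall>j\<in>V. \<forall>k\<in>V. \<forall>l\<in>V. E i k \<noteq> E j l \<longrightarrow>
        u i j * u k l = 0 \<and> u k l * u i j = 0)"

end

theory Submission
  imports Defs
begin

(* In a C*-algebra, projections summing to 1 are pairwise orthogonal, so the rows and columns
   of u consist of orthogonal projections; and a projection q = u i j commutes with a self-adjoint
   y as soon as q * y * u i p = 0 for all p \<noteq> j, because then q y = q y q is self-adjoint.
   On the graph side, counting along distance spheres shows that a cubic distance-regular graph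
   with more than 8 vertices has neither triangles nor quadrangles.

   For adjacent i and k, inserting the row sum of u k between u i j and u i p (j \<noteq> p) leaves,
   by (R3), only terms indexed by common neighbours of j and p, of which there is at most one;
   as the whole sum is u i j * u i p = 0, every term vanishes.  For i and k at distance 2
   through m, inserting the row sum of u m on both sides of u k x reduces u i j * u k x * u i p
   to a single term indexed by the common neighbour y of j and p.  This term vanishes for x = j
   and x = p by column orthogonality, for non-neighbours x of y by (R3), and hence, summing over
   x, also for the third neighbour of y. *)

section \<open>Projections in C*-algebras\<close>

lemma power_Suc_add_orthogonal_idempotent:
  fixes a w :: "'a::ring_1"
  assumes "a * a = a" "a * w = 0" "w * a = 0"
  shows "(a + w) ^ Suc n = a + w ^ Suc n"
proof (induction n)
  case 0
  then show ?case by simp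
next
  case (Suc n)
  have "w ^ Suc n * a = 0"
    by (simp only: power_Suc2 mult.assoc assms(3) mult_zero_right)
  have "(a + w) ^ Suc (Suc n) = (a + w ^ Suc n) * (a + w)"
    using Suc by (simp only: power_Suc2[of "a + w" "Suc n"])
  also have "\<dots> = a * a + a * w + w ^ Suc n * a + w ^ Suc n * w"
    by (simp add: algebra_simps)
  also have "\<dots> = a + w ^ Suc (Suc n)"
    using assms(1,2) \<open>w ^ Suc n * a = 0\<close> by (simp only: power_Suc2[of w "Suc n"]) simp
  finally show ?case .
qed

lemma le_1_if_power_2_power_bounded:
  fixes x :: real
  assumes "\<And>k. x ^ 2 ^ k \<le> C"
  shows "x \<le> 1"
proof (rule ccontr)
  assume "\<not> x \<le> 1"
  then obtain n where n: "C < x ^ n" and "1 < x"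
    using real_arch_pow[of x C] by auto
  then have "x ^ n \<le> x ^ 2 ^ n"
    by (intro power_increasing) (simp_all add: less_imp_le)
  then show False
    using n assms[of n] by simp
qed

locale cstar =
  fixes sc :: "complex \<Rightarrow> 'a::ring_1 \<Rightarrow> 'a" and nm :: "'a \<Rightarrow> real" and st :: "'a \<Rightarrow> 'a"
  assumes cstar_algebra: "cstar_algebra sc nm st"
begin

lemma scale_one: "sc 1 x = x"
  and scale_scale: "sc a (sc b x) = sc (a * b) x"
  and scale_add_left: "sc (a + b) x = sc a x + sc b x"
  and scale_mult_left: "sc a (x * y) = sc a x * y"
  and scale_mult_right: "sc a (x * y) = x * sc a y"
  and norm_nonneg: "0 \<le> nm x"
  and norm_eq_0_iff: "nm x = 0 \<longleftrightarrow> x = 0"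
  and norm_triangle: "nm (x + y) \<le> nm x + nm y"
  and norm_scale: "nm (sc a x) = cmod a * nm x"
  and norm_mult_le: "nm (x * y) \<le> nm x * nm y"
  and star_star: "st (st x) = x"
  and star_add: "st (x + y) = st x + st y"
  and star_scale: "st (sc a x) = sc (cnj a) (st x)"
  and star_mult: "st (x * y) = st y * st x"
  and norm_star_mult_self: "nm (st x * x) = (nm x)\<^sup>2"
  using cstar_algebra unfolding cstar_algebra_def by metis+

definition scalar :: "complex \<Rightarrow> 'a" where
  "scalar z = sc z 1"

lemma scale_eq_scalar_mult: "sc z x = scalar z * x"
  unfolding scalar_def by (metis scale_mult_left mult_1_left)

lemma scalar_commute: "scalar z * x = x * scalar z"
  unfolding scalar_def by (metis scale_mult_left scale_mult_right mult_1_left mult_1_right)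

lemma scalar_add: "scalar (a + b) = scalar a + scalar b"
  unfolding scalar_def by (rule scale_add_left)

lemma scalar_mult: "scalar (a * b) = scalar a * scalar b"
  unfolding scalar_def by (metis scale_scale scale_eq_scalar_mult scalar_def)

lemma scalar_one: "scalar 1 = 1"
  unfolding scalar_def by (rule scale_one)

lemma scalar_zero: "scalar 0 = 0"
  using scalar_add[of 0 0] by simp

lemma scalar_minus: "scalar (- a) = - scalar a"
  using scalar_add[of "- a" a] by (simp add: scalar_zero eq_neg_iff_add_eq_0)

lemma scalar_diff: "scalar (a - b) = scalar a - scalar b"
  using scalar_add[of a "- b"] by (simp add: scalar_minus)

lemma scalar_of_nat: "scalar (of_nat n) = of_nat n"
  by (induction n) (simp_all add: scalar_zero scalar_add scalar_one)

lemma scalar_mult_assoc: "scalar a * (scalar b * x) = scalar (a * b) * x"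
  by (simp add: scalar_mult mult.assoc)

lemma scalar_left_commute: "x * (scalar z * y) = scalar z * (x * y)"
  by (metis mult.assoc scalar_commute)

lemma norm_scalar_mult: "nm (scalar z * x) = cmod z * nm x"
  using norm_scale by (simp add: scale_eq_scalar_mult)

lemma norm_zero: "nm 0 = 0"
  using norm_eq_0_iff by simp

lemma norm_minus: "nm (- x) = nm x"
  using norm_scalar_mult[of "- 1" x] by (simp add: scalar_minus scalar_one)

lemma norm_diff_le: "nm (x - y) \<le> nm x + nm y"
  using norm_triangle[of x "- y"] by (simp add: norm_minus)

lemma norm_sum_le: "nm (sum f S) \<le> (\<Sum>m\<in>S. nm (f m))"
  by (induction S rule: infinite_finite_induct)
    (simp_all add: norm_zero order_trans[OF norm_triangle])

lemma star_zero: "st 0 = 0"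
  using star_add[of 0 0] by simp

lemma star_one: "st 1 = 1"
  using star_mult[of "st 1" 1] by (simp add: star_star)

lemma star_minus: "st (- x) = - st x"
  using star_add[of "- x" x] by (simp add: star_zero eq_neg_iff_add_eq_0)

lemma star_diff: "st (x - y) = st x - st y"
  using star_add[of x "- y"] by (simp add: star_minus)

lemma star_scalar: "st (scalar z) = scalar (cnj z)"
  unfolding scalar_def by (simp add: star_scale star_one)

lemma star_power: "st (x ^ n) = st x ^ n"
  by (induction n) (simp_all add: star_one star_mult power_commutes)

lemma star_sum: "st (sum f S) = (\<Sum>m\<in>S. st (f m))"
  by (induction S rule: infinite_finite_induct) (simp_all add: star_zero star_add)

definition projection :: "'a \<Rightarrow> bool" where
  "projection p \<longleftrightarrow> st p = p \<and> p * p = p"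

lemma projection_one_minus: "projection p \<Longrightarrow> projection (1 - p)"
  unfolding projection_def by (simp add: star_diff star_one algebra_simps)

lemma norm_projection_le_1:
  assumes "projection p"
  shows "nm p \<le> 1"
proof -
  have "nm p = (nm p)\<^sup>2"
    using norm_star_mult_self[of p] assms unfolding projection_def by simp
  then show ?thesis
    using norm_nonneg[of p] by (metis power2_eq_square mult_cancel_right1 order_refl zero_le_one)
qed

lemma norm_one_le_1: "nm 1 \<le> 1"
  by (rule norm_projection_le_1) (simp add: projection_def star_one)

lemma norm_power_le: "nm (x ^ n) \<le> nm x ^ n"
proof (induction n)
  case 0
  then show ?case using norm_one_le_1 by simp
next
  case (Suc n)
  have "nm (x ^ Suc n) \<le> nm x * nm (x ^ n)"
    using norm_mult_le[of x "x ^ n"] by simp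
  also have "\<dots> \<le> nm x * nm x ^ n"
    using Suc norm_nonneg by (simp add: mult_left_mono)
  finally show ?case by simp
qed

lemma norm_selfadjoint_power_2_power:
  assumes "st z = z"
  shows "nm (z ^ 2 ^ k) = nm z ^ 2 ^ k"
proof (induction k)
  case 0
  then show ?case by simp
next
  case (Suc k)
  have "st (z ^ 2 ^ k) = z ^ 2 ^ k"
    using assms by (simp add: star_power)
  then have "nm (z ^ 2 ^ k * z ^ 2 ^ k) = (nm (z ^ 2 ^ k))\<^sup>2"
    using norm_star_mult_self[of "z ^ 2 ^ k"] by simp
  then show ?case
    using Suc by (simp add: power_add[symmetric] mult_2 mult_2_right power_mult[symmetric])
qed

lemma norm_half_sum_squares_le_1:
  assumes "nm x \<le> 1" "nm y \<le> 1"
  shows "nm (scalar (1 / 2) * (x * x + y * y)) \<le> 1"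
proof -
  have "nm (scalar (1 / 2) * (x * x + y * y)) \<le> 1 / 2 * (nm (x * x) + nm (y * y))"
    using norm_triangle[of "x * x" "y * y"] by (simp add: norm_scalar_mult)
  also have "\<dots> \<le> 1 / 2 * (nm x * nm x + nm y * nm y)"
    using norm_mult_le[of x x] norm_mult_le[of y y] by simp
  also have "\<dots> \<le> 1 / 2 * (1 + 1)"
    using assms norm_nonneg[of x] norm_nonneg[of y] by (intro mult_left_mono add_mono mult_le_one) auto
  finally show ?thesis by simp
qed

lemma scalar_half_double: "scalar (1 / 2) * (x + x) = x"
proof -
  have "x + x = scalar 2 * x"
    using scalar_of_nat[of 2] by (simp add: mult_2)
  then show ?thesis
    by (simp add: scalar_mult_assoc scalar_one)
qed

lemma shift_mult_shift:
  "(1 + scalar a * h) * (1 + scalar b * h) = 1 + scalar (a + b) * h + scalar (a * b) * (h * h)"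
proof -
  have "(1 + scalar a * h) * (1 + scalar b * h)
      = 1 + scalar a * h + scalar b * h + scalar a * h * (scalar b * h)"
    by (simp add: distrib_left distrib_right add.assoc)
  also have "scalar a * h * (scalar b * h) = scalar (a * b) * (h * h)"
    by (simp add: mult.assoc scalar_left_commute[of h] scalar_mult_assoc)
  finally show ?thesis
    by (simp add: scalar_add distrib_right add.assoc)
qed

(* The set of z with contractive_shift h z is convex and, for self-adjoint h with
   nm (1 \<plusminus> h) \<le> 1, contains \<plusminus>1 and \<plusminus>\<i>.  Since (1 + a h)\<^sup>2 + (1 + b h)\<^sup>2 = 2 (1 + z h) for
   a, b = z (1 \<plusminus> \<i>) / 2, it grows by the factor sqrt 2 in each step, so it is all of the plane,
   which bounds nm (z h) uniformly in z. *)
definition contractive_shift :: "'a \<Rightarrow> complex \<Rightarrow> bool" where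
  "contractive_shift h z \<longleftrightarrow> nm (1 + scalar z * h) \<le> 1"

lemma contractive_shift_convex:
  assumes "contractive_shift h a" "contractive_shift h b" "0 \<le> t" "t \<le> 1"
  shows "contractive_shift h (of_real t * a + of_real (1 - t) * b)"
proof -
  have "scalar (of_real t) + scalar (of_real (1 - t)) = 1"
    by (simp add: scalar_add[symmetric] scalar_one)
  then have split: "1 + scalar (of_real t * a + of_real (1 - t) * b) * h
      = scalar (of_real t) * (1 + scalar a * h) + scalar (of_real (1 - t)) * (1 + scalar b * h)"
    by (simp only: distrib_left distrib_right scalar_add scalar_mult_assoc mult_1_right)
      (simp add: add.assoc[symmetric])
  have "nm (1 + scalar (of_real t * a + of_real (1 - t) * b) * h)
      \<le> nm (scalar (of_real t) * (1 + scalar a * h)) + nm (scalar (of_real (1 - t)) * (1 + scalar b * h))"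
    unfolding split by (rule norm_triangle)
  also have "\<dots> = t * nm (1 + scalar a * h) + (1 - t) * nm (1 + scalar b * h)"
    using assms(3,4) by (simp only: norm_scalar_mult norm_of_real)
  also have "\<dots> \<le> t * 1 + (1 - t) * 1"
    using assms unfolding contractive_shift_def by (intro add_mono mult_left_mono) auto
  finally show ?thesis
    unfolding contractive_shift_def by simp
qed

lemma contractive_shift_double:
  assumes small: "\<And>w. (cmod w)\<^sup>2 \<le> R \<Longrightarrow> contractive_shift h w"
    and z: "(cmod z)\<^sup>2 \<le> 2 * R"
  shows "contractive_shift h z"
proof -
  define a where "a = z * (1 + \<i>) / 2"
  define b where "b = z * (1 - \<i>) / 2"
  have "(cmod a)\<^sup>2 = (cmod z)\<^sup>2 / 2" "(cmod b)\<^sup>2 = (cmod z)\<^sup>2 / 2"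
    unfolding a_def b_def by (simp_all add: norm_mult norm_divide power_mult_distrib power_divide cmod_power2)
  then have "contractive_shift h a" "contractive_shift h b"
    using small z by auto
  then have "nm (scalar (1 / 2) * ((1 + scalar a * h) * (1 + scalar a * h)
      + (1 + scalar b * h) * (1 + scalar b * h))) \<le> 1"
    unfolding contractive_shift_def by (rule norm_half_sum_squares_le_1)
  moreover have "(1 + scalar a * h) * (1 + scalar a * h) + (1 + scalar b * h) * (1 + scalar b * h)
      = (1 + scalar z * h) + (1 + scalar z * h)"
  proof -
    have "a + a + (b + b) = z + z" "a * a + b * b = 0"
      unfolding a_def b_def by (simp_all add: field_simps)
    then have sums: "scalar (a + a) + scalar (b + b) = scalar z + scalar z"
      "scalar (a * a) + scalar (b * b) = 0"
      by (simp_all flip: scalar_add add: scalar_zero)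
    have "(1 + scalar a * h) * (1 + scalar a * h) + (1 + scalar b * h) * (1 + scalar b * h)
        = 1 + 1 + (scalar (a + a) + scalar (b + b)) * h + (scalar (a * a) + scalar (b * b)) * (h * h)"
      unfolding shift_mult_shift by (simp add: algebra_simps)
    also have "\<dots> = (1 + scalar z * h) + (1 + scalar z * h)"
      unfolding sums by (simp add: algebra_simps)
    finally show ?thesis .
  qed
  ultimately show ?thesis
    unfolding contractive_shift_def by (simp add: scalar_half_double)
qed

lemma contractive_shift_imaginary:
  assumes "st h = h" "contractive_shift h 1" "contractive_shift h (- 1)" "c = \<i> \<or> c = - \<i>"
  shows "contractive_shift h c"
proof -
  have "nm (scalar (1 / 2) * ((1 + h) * (1 + h) + (1 - h) * (1 - h))) \<le> 1"
    using assms(2,3) unfolding contractive_shift_def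
    by (intro norm_half_sum_squares_le_1) (simp_all add: scalar_one scalar_minus)
  moreover have "(1 + h) * (1 + h) + (1 - h) * (1 - h) = (1 + h * h) + (1 + h * h)"
    by (simp add: algebra_simps)
  ultimately have "nm (1 + h * h) \<le> 1"
    by (simp add: scalar_half_double)
  moreover have "st (1 + scalar c * h) * (1 + scalar c * h) = 1 + h * h"
  proof -
    have "st (1 + scalar c * h) = 1 + scalar (- c) * h"
      using assms(1,4) by (auto simp: star_add star_one star_mult star_scalar scalar_commute)
    then show ?thesis
      using assms(4) shift_mult_shift[of "- c" h c] by (auto simp: scalar_zero scalar_one)
  qed
  ultimately have "(nm (1 + scalar c * h))\<^sup>2 \<le> 1"
    by (simp flip: norm_star_mult_self)
  then show ?thesis
    unfolding contractive_shift_def using norm_nonneg by (simp add: power_le_one_iff)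
qed

lemma contractive_shift_disc:
  assumes "contractive_shift h 1" "contractive_shift h (- 1)"
    and "contractive_shift h \<i>" "contractive_shift h (- \<i>)"
    and z: "(cmod z)\<^sup>2 \<le> 1 / 4"
  shows "contractive_shift h z"
proof -
  have segment: "contractive_shift h (of_real x * c)"
    if "\<bar>x\<bar> \<le> 1" "contractive_shift h c" "contractive_shift h (- c)" for x c
  proof -
    have "contractive_shift h (of_real ((1 + x) / 2) * c + of_real (1 - (1 + x) / 2) * (- c))"
      using that by (intro contractive_shift_convex) auto
    moreover have "of_real ((1 + x) / 2) * c + of_real (1 - (1 + x) / 2) * (- c)
        = of_real ((1 + x) / 2 - (1 - (1 + x) / 2)) * c"
      by (simp only: of_real_diff left_diff_distrib mult_minus_right) simp
    ultimately show ?thesis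
      by simp
  qed
  have "cmod z \<le> 1 / 2"
    using z power2_le_imp_le[of "cmod z" "1 / 2"] by (simp add: power_divide)
  then have "\<bar>2 * Re z\<bar> \<le> 1" "\<bar>2 * Im z\<bar> \<le> 1"
    using abs_Re_le_cmod[of z] abs_Im_le_cmod[of z] by auto
  then have "contractive_shift h (of_real (2 * Re z) * 1)" "contractive_shift h (of_real (2 * Im z) * \<i>)"
    using segment assms(1-4) by blast+
  then have "contractive_shift h (of_real (1 / 2) * (of_real (2 * Re z) * 1)
      + of_real (1 - 1 / 2) * (of_real (2 * Im z) * \<i>))"
    by (intro contractive_shift_convex) auto
  moreover have "of_real (1 / 2) * (of_real (2 * Re z) * 1) + of_real (1 - 1 / 2) * (of_real (2 * Im z) * \<i>) = z"
    by (simp add: complex_eq_iff)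
  ultimately show ?thesis
    by simp
qed

lemma selfadjoint_eq_0_if_norms_le_1:
  assumes "st h = h" "nm (1 + h) \<le> 1" "nm (1 - h) \<le> 1"
  shows "h = 0"
proof -
  have pm1: "contractive_shift h 1" "contractive_shift h (- 1)"
    using assms(2,3) unfolding contractive_shift_def by (simp_all add: scalar_one scalar_minus)
  have imaginary: "contractive_shift h \<i>" "contractive_shift h (- \<i>)"
    using contractive_shift_imaginary[OF assms(1) pm1] by blast+
  have everywhere: "contractive_shift h z" if "(cmod z)\<^sup>2 \<le> 2 ^ n / 4" for n z
    using that
  proof (induction n arbitrary: z)
    case 0
    then show ?case
      using contractive_shift_disc[OF pm1 imaginary] by simp
  next
    case (Suc n)
    then show ?case
      using contractive_shift_double[of "2 ^ n / 4"] by simp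
  qed
  have bounded: "2 ^ n * nm h \<le> 4" for n :: nat
  proof -
    have "(cmod (of_real (2 ^ n / 2)))\<^sup>2 \<le> 2 ^ (2 * n) / 4"
      by (simp add: norm_power power_divide power_mult_distrib power2_eq_square mult_2 power_add)
    then have "nm (1 + scalar (of_real (2 ^ n / 2)) * h) \<le> 1"
      using everywhere unfolding contractive_shift_def by blast
    then have "nm (scalar (of_real (2 ^ n / 2)) * h) \<le> 2"
      using norm_diff_le[of "1 + scalar (of_real (2 ^ n / 2)) * h" 1] norm_one_le_1 by simp
    then show ?thesis
      by (simp add: norm_scalar_mult norm_power)
  qed
  show ?thesis
  proof (rule ccontr)
    assume "h \<noteq> 0"
    then have "nm h > 0"
      using norm_eq_0_iff norm_nonneg by (metis less_eq_real_def)
    moreover obtain n where "4 / nm h < 2 ^ n"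
      using real_arch_pow[of 2 "4 / nm h"] by auto
    ultimately show False
      using bounded[of n] by (simp add: field_simps)
  qed
qed

lemma norm_corner_le_1:
  assumes q: "projection q" and y: "st y = y" "nm y \<le> 1"
  shows "nm ((1 - q) + q * y * q) \<le> 1"
proof -
  define a where "a = 1 - q"
  define w where "w = q * y * q"
  have qq: "q * q = q" and "st q = q"
    using q unfolding projection_def by auto
  have a: "projection a"
    unfolding a_def using projection_one_minus[OF q] .
  have aw: "a * w = 0" "w * a = 0"
    unfolding a_def w_def by (simp_all add: left_diff_distrib right_diff_distrib mult.assoc qq
        flip: mult.assoc[of q q])
  have w: "st w = w"
    unfolding w_def using \<open>st q = q\<close> y(1) by (simp add: star_mult mult.assoc)
  have "nm w \<le> nm q * nm y * nm q"
    unfolding w_def using norm_mult_le norm_nonneg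
    by (metis mult_right_mono order_trans)
  also have "\<dots> \<le> 1"
    using norm_projection_le_1[OF q] y(2) norm_nonneg[of q] norm_nonneg[of y] by (simp add: mult_le_one)
  finally have "nm w \<le> 1" .
  have "nm (a + w) ^ 2 ^ k \<le> 2" for k
  proof -
    obtain n where n: "2 ^ k = Suc n"
      using not0_implies_Suc[of "2 ^ k"] by auto
    have "nm (a + w) ^ 2 ^ k = nm (a + w ^ Suc n)"
      using norm_selfadjoint_power_2_power[of "a + w" k] a w aw n power_Suc_add_orthogonal_idempotent[of a w n]
      unfolding projection_def by (simp add: star_add)
    also have "\<dots> \<le> nm a + nm w ^ Suc n"
      using norm_triangle[of a "w ^ Suc n"] norm_power_le[of w "Suc n"] by simp
    also have "\<dots> \<le> 1 + 1"
      using norm_projection_le_1[OF a] \<open>nm w \<le> 1\<close> norm_nonneg[of w] by (intro add_mono power_le_one)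
    finally show ?thesis by simp
  qed
  then show ?thesis
    unfolding a_def w_def by (rule le_1_if_power_2_power_bounded)
qed

lemma norm_one_minus_scaled_projection_sum_le_1:
  fixes e :: real
  assumes "finite S" "\<forall>m\<in>S. projection (P m)" "0 \<le> e" "e * card S \<le> 1"
  shows "nm (1 - scalar (of_real e) * sum P S) \<le> 1"
proof -
  have "(\<Sum>m\<in>S. scalar (of_real e) * (1 - P m)) = scalar (of_real (e * card S)) - scalar (of_real e) * sum P S"
    by (simp add: sum_subtractf right_diff_distrib scalar_mult scalar_of_nat mult_of_nat_commute
        flip: sum_distrib_left)
  then have split: "1 - scalar (of_real e) * sum P S
      = scalar (of_real (1 - e * card S)) * 1 + (\<Sum>m\<in>S. scalar (of_real e) * (1 - P m))"
    by (simp add: scalar_diff scalar_one)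
  have "nm (1 - scalar (of_real e) * sum P S)
      \<le> nm (scalar (of_real (1 - e * card S)) * 1) + (\<Sum>m\<in>S. nm (scalar (of_real e) * (1 - P m)))"
    unfolding split using norm_triangle add_left_mono[OF norm_sum_le] by (rule order_trans)
  also have "\<dots> = (1 - e * card S) * nm 1 + (\<Sum>m\<in>S. e * nm (1 - P m))"
    using assms(3,4) by (simp only: norm_scalar_mult norm_of_real)
  also have "\<dots> \<le> (1 - e * card S) * 1 + (\<Sum>m\<in>S. e * 1)"
    using assms norm_one_le_1 norm_projection_le_1[OF projection_one_minus]
    by (intro add_mono sum_mono mult_left_mono) auto
  finally show ?thesis
    by simp
qed

(* Since q s q = - q r q, the elements 1 - e q r q and 1 + e q r q are the compressions
   (1 - q) + q y q of the self-adjoint contractions y = 1 - e r and y = 1 - e s. *)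
lemma compression_eq_0_if_contractions:
  fixes e :: real
  assumes q: "projection q" and "st r = r" "st s = s" and sum: "q + r + s = 1" and "0 < e"
    and contractions: "nm (1 - scalar (of_real e) * r) \<le> 1" "nm (1 - scalar (of_real e) * s) \<le> 1"
  shows "q * r * q = 0"
proof -
  have qq: "q * q = q" and "st q = q"
    using q unfolding projection_def by auto
  have compress: "q * (1 - scalar (of_real e) * x) * q = q - scalar (of_real e) * (q * x * q)" for x
    by (simp add: left_diff_distrib right_diff_distrib qq mult.assoc scalar_left_commute[of q])
  have "s = 1 - q - r"
    using sum by (simp add: algebra_simps)
  then have corner: "1 - scalar (of_real e) * (q * r * q) = (1 - q) + q * (1 - scalar (of_real e) * r) * q"
    "1 + scalar (of_real e) * (q * r * q) = (1 - q) + q * (1 - scalar (of_real e) * s) * q"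
    unfolding compress by (simp_all add: left_diff_distrib right_diff_distrib qq mult.assoc)
  have "st (1 - scalar (of_real e) * x) = 1 - scalar (of_real e) * x" if "st x = x" for x
    using that by (simp add: star_diff star_one star_mult star_scalar scalar_commute)
  then have "nm (1 - scalar (of_real e) * (q * r * q)) \<le> 1" "nm (1 + scalar (of_real e) * (q * r * q)) \<le> 1"
    unfolding corner using q assms(2,3) contractions by (simp_all add: norm_corner_le_1)
  moreover have "st (scalar (of_real e) * (q * r * q)) = scalar (of_real e) * (q * r * q)"
    using \<open>st q = q\<close> \<open>st r = r\<close> by (simp add: star_mult star_scalar scalar_commute mult.assoc)
  ultimately have "scalar (of_real e) * (q * r * q) = 0"
    using selfadjoint_eq_0_if_norms_le_1 by (metis diff_conv_add_uminus)
  then show ?thesis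
    using \<open>0 < e\<close> norm_scalar_mult[of "of_real e" "q * r * q"] by (simp add: norm_zero norm_eq_0_iff)
qed

lemma projections_sum_1_orthogonal:
  assumes I: "finite I" "\<forall>m\<in>I. projection (P m)" "sum P I = 1"
    and ab: "a \<in> I" "b \<in> I" "a \<noteq> b"
  shows "P a * P b = 0"
proof -
  define q r s where "q = P a" and "r = P b" and "s = sum P (I - {a, b})"
  define e :: real where "e = 1 / card I"
  have q: "projection q" and r: "projection r"
    unfolding q_def r_def using I(2) ab by auto
  have "sum P I = q + (r + s)"
    unfolding q_def r_def s_def using I(1) ab
    by (simp add: sum.remove[of I a] sum.remove[of "I - {a}" b] Diff_insert2[symmetric])
  then have "q + r + s = 1"
    using I(3) by (simp add: add.assoc)
  have "card {a, b} \<le> card I"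
    using I(1) ab by (intro card_mono) auto
  then have e: "0 < e" "e * card {b} \<le> 1" "e * card (I - {a, b}) \<le> 1"
    unfolding e_def using ab I(1) by (auto simp: card_Diff_subset field_simps)
  have "nm (1 - scalar (of_real e) * r) \<le> 1" "nm (1 - scalar (of_real e) * s) \<le> 1"
    using norm_one_minus_scaled_projection_sum_le_1[of "{b}" P e]
      norm_one_minus_scaled_projection_sum_le_1[of "I - {a, b}" P e] I(1,2) ab e
    unfolding r_def s_def by auto
  moreover have "st r = r" "st s = s"
    using r I(2) unfolding s_def projection_def by (simp_all add: star_sum)
  ultimately have "q * r * q = 0"
    using compression_eq_0_if_contractions[OF q _ _ \<open>q + r + s = 1\<close> e(1)] by blast
  moreover have "st (r * q) * (r * q) = q * r * q"
    using q r unfolding projection_def by (simp add: star_mult mult.assoc flip: mult.assoc[of r r])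
  ultimately have "r * q = 0"
    using norm_star_mult_self[of "r * q"] by (simp add: norm_zero norm_eq_0_iff)
  then show ?thesis
    using q r star_mult[of r q] unfolding q_def r_def projection_def by (simp add: star_zero)
qed

end

section \<open>Cubic distance-regular graphs without short cycles\<close>

locale finite_simple_graph =
  fixes V :: "'v set" and E :: "'v \<Rightarrow> 'v \<Rightarrow> bool"
  assumes simple: "simple_graph V E"
begin

lemma finite_vertices: "finite V"
  and edge_vertices: "E x y \<Longrightarrow> x \<in> V \<and> y \<in> V"
  and edge_sym: "E x y \<Longrightarrow> E y x"
  and edge_irrefl: "\<not> E x x"
  using simple unfolding simple_graph_def by blast+

lemma finite_neighbours: "finite {y. E x y \<and> P y}"
  using finite_vertices by (rule finite_subset[rotated]) (auto dest: edge_vertices)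

end

locale connected_simple_graph = finite_simple_graph V E for V :: "'v set" and E +
  assumes connected: "connected_graph V E"
begin

lemma gdist_walk: "x \<in> V \<Longrightarrow> y \<in> V \<Longrightarrow> (E ^^ gdist E x y) x y"
  using connected unfolding connected_graph_def gdist_def by (metis LeastI_ex)

lemma gdist_le_walk: "(E ^^ n) x y \<Longrightarrow> gdist E x y \<le> n"
  unfolding gdist_def by (rule Least_le)

lemma gdist_self: "gdist E x x = 0"
  using gdist_le_walk[of 0 x x] by simp

lemma gdist_eq_0_iff: "x \<in> V \<Longrightarrow> y \<in> V \<Longrightarrow> gdist E x y = 0 \<longleftrightarrow> x = y"
  using gdist_walk[of x y] gdist_self by auto

lemma gdist_eq_1_iff:
  assumes "x \<in> V" "y \<in> V"
  shows "gdist E x y = 1 \<longleftrightarrow> E x y"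
proof
  assume "gdist E x y = 1"
  then show "E x y"
    using gdist_walk[OF assms] by (simp add: relcompp_apply)
next
  assume "E x y"
  then have "gdist E x y \<le> 1" "x \<noteq> y"
    using gdist_le_walk[of 1 x y] edge_irrefl by auto
  then show "gdist E x y = 1"
    using gdist_eq_0_iff[OF assms] by linarith
qed

lemma gdist_eq_2_iff:
  assumes "x \<in> V" "y \<in> V"
  shows "gdist E x y = 2 \<longleftrightarrow> x \<noteq> y \<and> \<not> E x y \<and> (\<exists>m. E x m \<and> E m y)"
proof
  assume d: "gdist E x y = 2"
  then have "(E ^^ Suc (Suc 0)) x y"
    using gdist_walk[OF assms] by (simp add: numeral_2_eq_2)
  then show "x \<noteq> y \<and> \<not> E x y \<and> (\<exists>m. E x m \<and> E m y)"
    using d gdist_eq_0_iff[OF assms] gdist_eq_1_iff[OF assms] by (auto simp: relcompp_apply)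
next
  assume "x \<noteq> y \<and> \<not> E x y \<and> (\<exists>m. E x m \<and> E m y)"
  then have "(E ^^ Suc (Suc 0)) x y" "gdist E x y \<noteq> 0" "gdist E x y \<noteq> 1"
    using gdist_eq_0_iff[OF assms] gdist_eq_1_iff[OF assms] by (auto simp: relcompp_apply)
  then show "gdist E x y = 2"
    using gdist_le_walk by fastforce
qed

lemma gdist_triangle:
  assumes "x \<in> V" "y \<in> V" "z \<in> V"
  shows "gdist E x z \<le> gdist E x y + gdist E y z"
  using gdist_walk[of x y] gdist_walk[of y z] assms
  by (intro gdist_le_walk) (auto simp: relpowp_add relcompp_apply)

lemma gdist_edge_le: "E y z \<Longrightarrow> x \<in> V \<Longrightarrow> gdist E x z \<le> gdist E x y + 1"
  using gdist_triangle[of x y z] gdist_eq_1_iff[of y z] edge_vertices[of y z] by simp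

lemma gdist_predecessor:
  assumes "x \<in> V" "y \<in> V" "gdist E x y = Suc d"
  obtains z where "E z y" "gdist E x z = d"
proof -
  obtain z where z: "(E ^^ d) x z" "E z y"
    using gdist_walk[OF assms(1,2)] assms(3) by auto
  then have "gdist E x z \<le> d" "Suc d \<le> gdist E x z + 1"
    using gdist_le_walk gdist_edge_le[OF z(2) assms(1)] assms(3) by auto
  then show ?thesis
    using that z(2) by simp
qed

lemma connected_closed_subset:
  assumes "a \<in> V" "a \<in> S" "\<And>w x. w \<in> S \<Longrightarrow> E w x \<Longrightarrow> x \<in> S"
  shows "V \<subseteq> S"
proof
  fix y
  assume "y \<in> V"
  then obtain n where "(E ^^ n) a y"
    using connected assms(1) unfolding connected_graph_def by blast
  then show "y \<in> S"
    by (induction n arbitrary: y) (auto intro: assms(2,3))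
qed

definition common_neighbours :: "'v \<Rightarrow> 'v \<Rightarrow> 'v set" where
  "common_neighbours v w = {x. E v x \<and> E w x}"

lemma finite_common_neighbours: "finite (common_neighbours v w)"
  unfolding common_neighbours_def using finite_neighbours by simp

lemma neighbours_adjacent_if_common_neighbours:
  assumes N: "{y. E a y} = {y1, y2, y3}" and distinct: "y1 \<noteq> y2" "y2 \<noteq> y3" "y1 \<noteq> y3"
    and t: "\<forall>y\<in>{y1, y2, y3}. card (common_neighbours a y) = t" "t \<noteq> 0"
  shows "E y1 y2"
proof (rule ccontr)
  assume "\<not> E y1 y2"
  have neighbour: "x = y1 \<or> x = y2 \<or> x = y3" if "E a x" for x
    using N that by blast
  have "common_neighbours a y1 \<subseteq> {y3}" "common_neighbours a y2 \<subseteq> {y3}"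
    unfolding common_neighbours_def using neighbour \<open>\<not> E y1 y2\<close> edge_irrefl edge_sym by blast+
  moreover have "common_neighbours a y1 \<noteq> {}" "common_neighbours a y2 \<noteq> {}"
    using t by auto
  ultimately have "common_neighbours a y1 = {y3}" "common_neighbours a y2 = {y3}"
    by blast+
  then have "t = 1" "{y1, y2} \<subseteq> common_neighbours a y3"
    using t(1) N unfolding common_neighbours_def by (auto intro: edge_sym)
  then show False
    using card_mono[OF finite_common_neighbours, of "{y1, y2}" a y3] t(1) distinct by auto
qed

definition sphere :: "'v \<Rightarrow> nat \<Rightarrow> 'v set" where
  "sphere a i = {w \<in> V. gdist E a w = i}"

lemma finite_sphere: "finite (sphere a i)"
  unfolding sphere_def using finite_vertices by simp

lemma sphere_0: "a \<in> V \<Longrightarrow> sphere a 0 = {a}"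
  unfolding sphere_def using gdist_eq_0_iff by auto

lemma sphere_1: "a \<in> V \<Longrightarrow> sphere a 1 = {y. E a y}"
  unfolding sphere_def using gdist_eq_1_iff edge_vertices by auto

lemma sphere_nonempty_Suc:
  assumes "a \<in> V" "sphere a (Suc i) \<noteq> {}"
  shows "sphere a i \<noteq> {}"
proof -
  obtain y where "y \<in> V" "gdist E a y = Suc i"
    using assms(2) unfolding sphere_def by auto
  then obtain z where "E z y" "gdist E a z = i"
    using gdist_predecessor[OF assms(1)] by blast
  then show ?thesis
    unfolding sphere_def using edge_vertices by auto
qed

lemma card_vertices_le_sum_spheres:
  assumes "a \<in> V" "sphere a (Suc r) = {}"
  shows "card V \<le> (\<Sum>i\<le>r. card (sphere a i))"
proof -
  have "V \<subseteq> (\<Union>i\<le>r. sphere a i)"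
  proof (rule connected_closed_subset[OF assms(1)])
    show "a \<in> (\<Union>i\<le>r. sphere a i)"
      using sphere_0[OF assms(1)] by auto
  next
    fix w x
    assume "w \<in> (\<Union>i\<le>r. sphere a i)" "E w x"
    then have "gdist E a w \<le> r" "x \<in> V"
      unfolding sphere_def using edge_vertices by auto
    then have "gdist E a x \<le> Suc r" "gdist E a x \<noteq> Suc r"
      using gdist_edge_le[OF \<open>E w x\<close> assms(1)] assms(2) unfolding sphere_def by auto
    then show "x \<in> (\<Union>i\<le>r. sphere a i)"
      unfolding sphere_def using \<open>x \<in> V\<close> by auto
  qed
  then have "card V \<le> card (\<Union>i\<le>r. sphere a i)"
    by (simp add: card_mono finite_sphere)
  also have "\<dots> \<le> (\<Sum>i\<le>r. card (sphere a i))"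
    by (rule card_UN_le) simp
  finally show ?thesis .
qed

end

locale distance_regular_graph = connected_simple_graph +
  fixes b c :: "nat \<Rightarrow> nat"
  assumes intersection_numbers: "\<forall>v\<in>V. \<forall>w\<in>V.
    card {x. E w x \<and> gdist E v x = gdist E v w + 1} = b (gdist E v w) \<and>
    card {x. E w x \<and> gdist E v x + 1 = gdist E v w} = c (gdist E v w)"
begin

lemma card_successors:
    "v \<in> V \<Longrightarrow> w \<in> V \<Longrightarrow> card {x. E w x \<and> gdist E v x = gdist E v w + 1} = b (gdist E v w)"
  and card_predecessors:
    "v \<in> V \<Longrightarrow> w \<in> V \<Longrightarrow> card {x. E w x \<and> gdist E v x + 1 = gdist E v w} = c (gdist E v w)"
  using intersection_numbers by blast+

lemma sphere_double_counting:
  assumes "a \<in> V"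
  shows "card (sphere a i) * b i = card (sphere a (Suc i)) * c (Suc i)"
proof -
  have "card (sphere a i) * b i = (\<Sum>w\<in>sphere a i. b i)"
    by simp
  also have "\<dots> = (\<Sum>w\<in>sphere a i. card (sphere a (Suc i) \<inter> {x. E w x}))"
  proof (rule sum.cong[OF refl])
    fix w
    assume "w \<in> sphere a i"
    moreover have "sphere a (Suc i) \<inter> {x. E w x} = {x. E w x \<and> gdist E a x = gdist E a w + 1}"
      using \<open>w \<in> sphere a i\<close> edge_vertices unfolding sphere_def by auto
    ultimately show "b i = card (sphere a (Suc i) \<inter> {x. E w x})"
      using card_successors[OF assms, of w] unfolding sphere_def by simp
  qed
  also have "\<dots> = (\<Sum>x\<in>sphere a (Suc i). card (sphere a i \<inter> {w. E w x}))"
    using sum.swap[where A = "sphere a i" and B = "sphere a (Suc i)" and g = "\<lambda>w x. of_bool (E w x) :: nat"]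
    by (simp add: finite_sphere)
  also have "\<dots> = (\<Sum>x\<in>sphere a (Suc i). c (Suc i))"
  proof (rule sum.cong[OF refl])
    fix x
    assume "x \<in> sphere a (Suc i)"
    moreover have "sphere a i \<inter> {w. E w x} = {w. E x w \<and> gdist E a w + 1 = gdist E a x}"
      using \<open>x \<in> sphere a (Suc i)\<close> edge_vertices edge_sym unfolding sphere_def by auto
    ultimately show "card (sphere a i \<inter> {w. E w x}) = c (Suc i)"
      using card_predecessors[OF assms, of x] unfolding sphere_def by simp
  qed
  finally show ?thesis
    by simp
qed

lemma c_pos:
  assumes "a \<in> V" "sphere a (Suc i) \<noteq> {}"
  shows "0 < c (Suc i)"
proof -
  obtain x where x: "x \<in> V" "gdist E a x = Suc i"
    using assms(2) unfolding sphere_def by auto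
  then obtain z where "E z x" "gdist E a z = i"
    using gdist_predecessor[OF assms(1)] by blast
  then have "z \<in> {w. E x w \<and> gdist E a w + 1 = gdist E a x}"
    using x(2) edge_sym[OF \<open>E z x\<close>] by simp
  then have "0 < card {w. E x w \<and> gdist E a w + 1 = gdist E a x}"
    using finite_neighbours[of x] by (auto simp: card_gt_0_iff)
  then show ?thesis
    using card_predecessors[OF assms(1) x(1)] x(2) by simp
qed

lemma c_mono:
  assumes "a \<in> V" "sphere a (Suc (Suc i)) \<noteq> {}"
  shows "c (Suc i) \<le> c (Suc (Suc i))"
proof -
  obtain x where x: "x \<in> V" "gdist E a x = Suc (Suc i)"
    using assms(2) unfolding sphere_def by auto
  have "(E ^^ Suc (Suc i)) a x"
    using gdist_walk[OF assms(1) x(1)] unfolding x(2) .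
  then obtain y where y: "E a y" "(E ^^ Suc i) y x"
    by (rule relpowp_Suc_E2)
  have "y \<in> V"
    using y(1) edge_vertices by blast
  have "gdist E y x \<le> Suc i" "gdist E a x \<le> 1 + gdist E y x"
    using gdist_le_walk[OF y(2)] gdist_triangle[OF assms(1) \<open>y \<in> V\<close> x(1)]
      gdist_eq_1_iff[OF assms(1) \<open>y \<in> V\<close>] y(1) by auto
  then have yx: "gdist E y x = Suc i"
    using x(2) by simp
  have "{z. E x z \<and> gdist E y z + 1 = gdist E y x} \<subseteq> {z. E x z \<and> gdist E a z + 1 = gdist E a x}"
  proof safe
    fix z
    assume z: "E x z" "gdist E y z + 1 = gdist E y x"
    then have "z \<in> V"
      using edge_vertices by blast
    have "gdist E a z \<le> 1 + gdist E y z" "gdist E a x \<le> gdist E a z + 1"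
      using gdist_triangle[OF assms(1) \<open>y \<in> V\<close> \<open>z \<in> V\<close>] gdist_eq_1_iff[OF assms(1) \<open>y \<in> V\<close>] y(1)
        gdist_edge_le[OF edge_sym[OF z(1)] assms(1)] by auto
    then show "gdist E a z + 1 = gdist E a x"
      using x(2) yx z(2) by simp
  qed
  then have "card {z. E x z \<and> gdist E y z + 1 = gdist E y x}
      \<le> card {z. E x z \<and> gdist E a z + 1 = gdist E a x}"
    by (rule card_mono[OF finite_neighbours])
  then show ?thesis
    using card_predecessors[OF assms(1) x(1)] card_predecessors[OF \<open>y \<in> V\<close> x(1)] x(2) yx by simp
qed

end

definition quadrangle_free :: "('v \<Rightarrow> 'v \<Rightarrow> bool) \<Rightarrow> bool" where
  "quadrangle_free E \<longleftrightarrow>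
    (\<forall>v w x y. v \<noteq> w \<longrightarrow> E v x \<longrightarrow> E w x \<longrightarrow> E v y \<longrightarrow> E w y \<longrightarrow> x = y)"

locale cubic_distance_regular_graph = distance_regular_graph +
  assumes cubic: "cubic V E"
begin

lemma card_neighbours: "x \<in> V \<Longrightarrow> card {y. E x y} = 3"
  using cubic unfolding cubic_def by blast

lemma b_plus_c_le_3:
  assumes "a \<in> V" "sphere a i \<noteq> {}"
  shows "b i + c i \<le> 3"
proof -
  obtain w where w: "w \<in> V" "gdist E a w = i"
    using assms(2) unfolding sphere_def by auto
  let ?B = "{x. E w x \<and> gdist E a x = gdist E a w + 1}"
  let ?C = "{x. E w x \<and> gdist E a x + 1 = gdist E a w}"
  have "card ?B + card ?C = card (?B \<union> ?C)"
    by (rule card_Un_disjoint[symmetric]) (auto simp: finite_neighbours)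
  also have "\<dots> \<le> card {x. E w x}"
    by (rule card_mono) (auto simp: finite_neighbours[where P = "\<lambda>_. True", simplified])
  finally show ?thesis
    using card_successors[OF assms(1) w(1)] card_predecessors[OF assms(1) w(1)] card_neighbours[OF w(1)] w(2)
    by simp
qed

lemma card_common_neighbours_edge:
  assumes "E v w"
  shows "card (common_neighbours v w) + b 1 = 2"
proof -
  have v: "v \<in> V" and w: "w \<in> V"
    using assms edge_vertices by auto
  then have d: "gdist E v w = 1"
    using assms gdist_eq_1_iff by blast
  have adjacent_gdist: "gdist E v x = 1" if "E v x" for x
    using that gdist_eq_1_iff[OF v] edge_vertices by blast
  define B where "B = {x. E w x \<and> gdist E v x = gdist E v w + 1}"
  have "{x. E w x} = insert v (common_neighbours v w \<union> B)"
  proof (intro set_eqI iffI)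
    fix x
    assume "x \<in> {x. E w x}"
    then have "E w x" "x \<in> V" "gdist E v x \<le> 2"
      using edge_vertices gdist_edge_le[of w x v] v d by auto
    then show "x \<in> insert v (common_neighbours v w \<union> B)"
      using gdist_eq_0_iff[OF v] gdist_eq_1_iff[OF v] d edge_sym[OF \<open>E w x\<close>]
      unfolding common_neighbours_def B_def by (auto simp: le_Suc_eq numeral_2_eq_2)
  next
    fix x
    assume "x \<in> insert v (common_neighbours v w \<union> B)"
    then show "x \<in> {x. E w x}"
      using edge_sym[OF assms] unfolding common_neighbours_def B_def by auto
  qed
  moreover have "v \<notin> common_neighbours v w \<union> B" "common_neighbours v w \<inter> B = {}"
    unfolding common_neighbours_def B_def using edge_irrefl gdist_self d adjacent_gdist by auto
  moreover have "finite B"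
    unfolding B_def by (rule finite_neighbours)
  ultimately have "3 = Suc (card (common_neighbours v w) + card B)"
    using card_neighbours[OF w] finite_common_neighbours by (simp add: card_Un_disjoint)
  then show ?thesis
    using card_successors[OF v w] d unfolding B_def by simp
qed

lemma card_vertices_le_4_if_b1_eq_0:
  assumes a: "a \<in> V" and "b 1 = 0"
  shows "card V \<le> 4"
proof -
  have "sphere a 2 = {}"
  proof (rule ccontr)
    assume "sphere a 2 \<noteq> {}"
    then have "0 < c 2" "0 < card (sphere a 2)"
      using c_pos[OF a, of 1] finite_sphere by (auto simp: numeral_2_eq_2 card_gt_0_iff)
    then show False
      using sphere_double_counting[OF a, of 1] \<open>b 1 = 0\<close> by (simp add: numeral_2_eq_2)
  qed
  then have "card V \<le> card (sphere a 0) + card (sphere a 1)"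
    using card_vertices_le_sum_spheres[OF a, of 1] by (simp add: numeral_2_eq_2)
  then show ?thesis
    using sphere_0[OF a] sphere_1[OF a] card_neighbours[OF a] by simp
qed

(* Every edge lies in 2 - b 1 triangles.  If that number is positive, the neighbours of a vertex
   are pairwise adjacent, so b 1 = 0. *)
lemma triangle_free:
  assumes "4 < card V" "E v w"
  shows "common_neighbours v w = {}"
proof -
  define t where "t = 2 - b 1"
  have t: "card (common_neighbours x y) = t" if "E x y" for x y
    using card_common_neighbours_edge[OF that] unfolding t_def by simp
  have "t = 0"
  proof (rule ccontr)
    assume "t \<noteq> 0"
    obtain a where a: "a \<in> V"
      using assms(2) edge_vertices by blast
    then obtain y1 y2 y3 where N: "{y. E a y} = {y1, y2, y3}"
      and distinct: "y1 \<noteq> y2" "y2 \<noteq> y3" "y1 \<noteq> y3"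
      using card_neighbours[OF a] unfolding card_3_iff by blast
    have t_N: "\<forall>y\<in>{y1, y2, y3}. card (common_neighbours a y) = t"
      using t N by auto
    have "{y1, y3, y2} = {y1, y2, y3}"
      by auto
    then have "E y1 y2" "E y1 y3"
      using neighbours_adjacent_if_common_neighbours[OF N distinct t_N \<open>t \<noteq> 0\<close>]
        neighbours_adjacent_if_common_neighbours[of a y1 y3 y2 t] N distinct t_N \<open>t \<noteq> 0\<close>
      by simp_all
    then have "{y2, y3} \<subseteq> common_neighbours a y1"
      using N unfolding common_neighbours_def by auto
    then have "card {y2, y3} \<le> t"
      using card_mono[OF finite_common_neighbours] t_N by (metis insertCI)
    then have "b 1 = 0"
      using distinct unfolding t_def by simp
    then show False
      using card_vertices_le_4_if_b1_eq_0[OF a] assms(1) by simp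
  qed
  then show ?thesis
    using t[OF assms(2)] finite_common_neighbours by simp
qed

(* Once c 2 \<ge> 2, also c 3, c 4 \<ge> 2, and double counting bounds the spheres around a by
   1, 3, 3, 1 and 0. *)
lemma card_vertices_le_8:
  assumes a: "a \<in> V" and b1: "b 1 = 2" and c2: "2 \<le> c 2"
  shows "card V \<le> 8"
proof -
  have count: "card (sphere a i) * b i = card (sphere a (Suc i)) * c (Suc i)" for i
    using sphere_double_counting[OF a] .
  have S1: "card (sphere a 1) = 3"
    using sphere_1[OF a] card_neighbours[OF a] by simp
  have "card (sphere a 2) * c 2 = 6"
    using count[of 1] S1 b1 by (simp add: numeral_2_eq_2)
  then have "card (sphere a 2) \<le> 3" "sphere a 2 \<noteq> {}"
    using c2 mult_le_mono2[OF c2, of "card (sphere a 2)"] by auto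
  then have b2: "b 2 \<le> 1"
    using b_plus_c_le_3[OF a, of 2] c2 by simp
  have c3: "2 \<le> c 3" if "sphere a 3 \<noteq> {}"
    using c_mono[OF a, of 1] that c2 by (simp add: numeral_2_eq_2 numeral_3_eq_3)
  have S3: "card (sphere a 3) \<le> 1"
  proof (cases "sphere a 3 = {}")
    case False
    have "card (sphere a 3) * c 3 \<le> 3"
      using count[of 2] \<open>card (sphere a 2) \<le> 3\<close> b2 mult_le_mono[of "card (sphere a 2)" 3 "b 2" 1]
      by (simp add: numeral_3_eq_3)
    moreover have "card (sphere a 3) * 2 \<le> card (sphere a 3) * c 3"
      using c3[OF False] by simp
    ultimately show ?thesis
      by linarith
  qed simp
  have "sphere a 4 = {}"
  proof (rule ccontr)
    assume "sphere a 4 \<noteq> {}"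
    then have "sphere a 3 \<noteq> {}"
      using sphere_nonempty_Suc[OF a, of 3] by (simp add: numeral_3_eq_3 eval_nat_numeral)
    then have "b 3 \<le> 1" "2 \<le> c 4"
      using b_plus_c_le_3[OF a, of 3] c3 c_mono[OF a, of 2] \<open>sphere a 4 \<noteq> {}\<close>
      by (simp_all add: eval_nat_numeral)
    moreover have "0 < card (sphere a 4)"
      using \<open>sphere a 4 \<noteq> {}\<close> finite_sphere by (simp add: card_gt_0_iff)
    ultimately show False
      using count[of 3] S3 mult_le_mono[of "card (sphere a 3)" 1 "b 3" 1]
        mult_le_mono2[OF \<open>2 \<le> c 4\<close>, of "card (sphere a 4)"] by (simp add: eval_nat_numeral)
  qed
  then have "card V \<le> (\<Sum>i\<le>3. card (sphere a i))"
    using card_vertices_le_sum_spheres[OF a, of 3] by (simp add: eval_nat_numeral)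
  also have "\<dots> \<le> 8"
    using sphere_0[OF a] S1 \<open>card (sphere a 2) \<le> 3\<close> S3 by (simp add: eval_nat_numeral)
  finally show ?thesis .
qed

lemma quadrangle_free_if_card_gt_8:
  assumes "8 < card V"
  shows "quadrangle_free E"
  unfolding quadrangle_free_def
proof (intro allI impI, rule ccontr)
  fix v w x y
  assume vw: "v \<noteq> w" and edges: "E v x" "E w x" "E v y" "E w y" and "x \<noteq> y"
  have v: "v \<in> V" and w: "w \<in> V"
    using edges edge_vertices by auto
  have "x \<in> common_neighbours v w"
    using edges unfolding common_neighbours_def by simp
  then have "\<not> E v w"
    using triangle_free assms by fastforce
  then have d: "gdist E v w = 2"
    using gdist_eq_2_iff[OF v w] vw edges(1) edge_sym[OF edges(2)] by blast
  have "gdist E v x = 1" "gdist E v y = 1"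
    using edges gdist_eq_1_iff[OF v] edge_vertices by blast+
  then have "{x, y} \<subseteq> {z. E w z \<and> gdist E v z + 1 = gdist E v w}"
    using d edges(2,4) by simp
  then have "card {x, y} \<le> c 2"
    using card_mono[OF finite_neighbours] card_predecessors[OF v w] d by metis
  then have "2 \<le> c 2"
    using \<open>x \<noteq> y\<close> by simp
  moreover have "b 1 = 2"
    using card_common_neighbours_edge[OF edges(1)] triangle_free[OF _ edges(1)] assms by simp
  ultimately show False
    using card_vertices_le_8[OF v] assms by simp
qed

end

section \<open>Commutation relations of quantum automorphisms\<close>

lemma sum_eq_single:
  assumes "finite A" "a \<in> A" "\<And>x. x \<in> A \<Longrightarrow> x \<noteq> a \<Longrightarrow> f x = 0"
  shows "sum f A = f a"
  using sum.mono_neutral_right[of A "{a}" f] assms by auto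

lemma mult5_eq_0_if_middle_eq_0:
  fixes a b c d e :: "'a::ring"
  shows "b * c * d = 0 \<Longrightarrow> a * b * c * d * e = 0"
  by (metis mult.assoc mult_zero_left mult_zero_right)

locale quantum_automorphisms = cstar sc nm st + finite_simple_graph V E
  for sc :: "complex \<Rightarrow> 'a::ring_1 \<Rightarrow> 'a" and nm st and V :: "'v set" and E +
  fixes u :: "'v \<Rightarrow> 'v \<Rightarrow> 'a"
  assumes qaut: "qaut_rel V E st u"
begin

lemma projection_entry: "i \<in> V \<Longrightarrow> j \<in> V \<Longrightarrow> projection (u i j)"
  using qaut unfolding qaut_rel_def projection_def by metis

lemma row_sum: "i \<in> V \<Longrightarrow> (\<Sum>l\<in>V. u i l) = 1"
  and column_sum: "j \<in> V \<Longrightarrow> (\<Sum>l\<in>V. u l j) = 1"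
  using qaut unfolding qaut_rel_def by blast+

lemma mult_eq_0_if_adjacency_differs:
  "i \<in> V \<Longrightarrow> j \<in> V \<Longrightarrow> k \<in> V \<Longrightarrow> l \<in> V \<Longrightarrow> E i k \<noteq> E j l \<Longrightarrow> u i j * u k l = 0"
  using qaut unfolding qaut_rel_def by blast

lemma row_orthogonal: "i \<in> V \<Longrightarrow> j \<in> V \<Longrightarrow> p \<in> V \<Longrightarrow> j \<noteq> p \<Longrightarrow> u i j * u i p = 0"
  using projections_sum_1_orthogonal[OF finite_vertices, of "u i"] projection_entry row_sum by blast

lemma column_orthogonal: "i \<in> V \<Longrightarrow> k \<in> V \<Longrightarrow> j \<in> V \<Longrightarrow> i \<noteq> k \<Longrightarrow> u i j * u k j = 0"
  using projections_sum_1_orthogonal[OF finite_vertices, of "\<lambda>l. u l j"] projection_entry column_sum by blast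

lemma insert_row_sum:
  assumes "k \<in> V"
  shows "x * y = (\<Sum>p\<in>V. x * u k p * y)"
proof -
  have "x * y = x * (\<Sum>p\<in>V. u k p) * y"
    using row_sum[OF assms] by simp
  then show ?thesis
    by (simp add: sum_distrib_left sum_distrib_right)
qed

lemma commute_if_sandwich_zero:
  assumes ij: "i \<in> V" "j \<in> V" and "st y = y"
    and zero: "\<And>p. p \<in> V \<Longrightarrow> p \<noteq> j \<Longrightarrow> u i j * y * u i p = 0"
  shows "u i j * y = y * u i j"
proof -
  have u: "st (u i j) = u i j"
    using projection_entry[OF ij] unfolding projection_def by simp
  have "u i j * y = (\<Sum>p\<in>V. u i j * y * u i p)"
    using insert_row_sum[OF ij(1), of "u i j * y" 1] by simp
  also have "\<dots> = u i j * y * u i j"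
    by (rule sum_eq_single[OF finite_vertices ij(2)]) (rule zero)
  finally have sandwich: "u i j * y = u i j * y * u i j" .
  have "st (u i j * y) = st (u i j * y * u i j)"
    using sandwich by (rule arg_cong)
  also have "\<dots> = u i j * y * u i j"
    using u \<open>st y = y\<close> by (simp add: star_mult mult.assoc)
  also have "\<dots> = u i j * y"
    by (rule sandwich[symmetric])
  finally show ?thesis
    using u \<open>st y = y\<close> by (simp add: star_mult)
qed

lemma sandwich_zero_adjacent:
  assumes quadrangle: "quadrangle_free E" and ik: "E i k"
    and V: "j \<in> V" "p \<in> V" "x \<in> V" and "j \<noteq> p"
  shows "u i j * u k x * u i p = 0"
proof -
  have i: "i \<in> V" and k: "k \<in> V"
    using ik edge_vertices by auto
  have vanish: "u i j * u k x' * u i p = 0" if "x' \<in> V" "\<not> (E j x' \<and> E x' p)" for x'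
  proof (cases "E j x'")
    case True
    then have "u k x' * u i p = 0"
      using that i k V edge_sym[OF ik] by (intro mult_eq_0_if_adjacency_differs) auto
    then show ?thesis
      by (simp add: mult.assoc)
  next
    case False
    then have "u i j * u k x' = 0"
      using that i k V ik by (intro mult_eq_0_if_adjacency_differs) auto
    then show ?thesis
      by simp
  qed
  show ?thesis
  proof (cases "E j x \<and> E x p")
    case True
    have "0 = u i j * u i p"
      using row_orthogonal i V \<open>j \<noteq> p\<close> by simp
    also have "\<dots> = (\<Sum>x'\<in>V. u i j * u k x' * u i p)"
      by (rule insert_row_sum[OF k])
    also have "\<dots> = u i j * u k x * u i p"
    proof (rule sum_eq_single[OF finite_vertices V(3)])
      fix x'
      assume "x' \<in> V" "x' \<noteq> x"
      then have "\<not> (E j x' \<and> E x' p)"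
        using True quadrangle \<open>j \<noteq> p\<close> edge_sym unfolding quadrangle_free_def by metis
      then show "u i j * u k x' * u i p = 0"
        using vanish \<open>x' \<in> V\<close> by blast
    qed
    finally show ?thesis ..
  next
    case False
    then show ?thesis
      using vanish V(3) by blast
  qed
qed

lemma commute_adjacent:
  assumes "quadrangle_free E" "E i k" "j \<in> V" "l \<in> V"
  shows "u i j * u k l = u k l * u i j"
proof (rule commute_if_sandwich_zero)
  show "i \<in> V" "j \<in> V" "st (u k l) = u k l"
    using assms edge_vertices projection_entry unfolding projection_def by auto
  show "u i j * u k l * u i p = 0" if "p \<in> V" "p \<noteq> j" for p
    using sandwich_zero_adjacent assms that by metis
qed

lemma sandwich_diagonal:
  assumes quadrangle: "quadrangle_free E" and "E i m" "E m k"
    and V: "j \<in> V" "x \<in> V" "p \<in> V"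
  shows "u i j * u k x * u i p = (\<Sum>y\<in>V. u i j * u m y * u k x * u m y * u i p)"
proof -
  have m: "m \<in> V"
    using assms edge_vertices by auto
  have "u i j * u k x * u i p = u i j * (u k x * u i p)"
    by (rule mult.assoc)
  also have "\<dots> = (\<Sum>y\<in>V. u i j * u m y * (u k x * u i p))"
    by (rule insert_row_sum[OF m])
  also have "\<dots> = (\<Sum>y\<in>V. u i j * u m y * u k x * u m y * u i p)"
  proof (rule sum.cong[OF refl])
    fix y
    assume "y \<in> V"
    have "u i j * u m y * (u k x * u i p) = (\<Sum>z\<in>V. u i j * u m y * u k x * u m z * u i p)"
      unfolding mult.assoc[symmetric] by (rule insert_row_sum[OF m])
    also have "\<dots> = u i j * u m y * u k x * u m y * u i p"
    proof (rule sum_eq_single[OF finite_vertices \<open>y \<in> V\<close>])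
      fix z
      assume "z \<in> V" "z \<noteq> y"
      then have "u m y * u k x * u m z = 0"
        using sandwich_zero_adjacent[OF quadrangle \<open>E m k\<close> \<open>y \<in> V\<close> _ V(2)] by blast
      then show "u i j * u m y * u k x * u m z * u i p = 0"
        by (rule mult5_eq_0_if_middle_eq_0)
    qed
    finally show "u i j * u m y * (u k x * u i p) = u i j * u m y * u k x * u m y * u i p" .
  qed
  finally show ?thesis .
qed

lemma sandwich_term_zero_unless_common_neighbour:
  assumes im: "E i m" and V: "j \<in> V" "y \<in> V" "p \<in> V" and "\<not> (E j y \<and> E y p)"
  shows "u i j * u m y * z * u m y * u i p = 0"
proof -
  have i: "i \<in> V" and m: "m \<in> V"
    using im edge_vertices by auto
  show ?thesis
  proof (cases "E j y")
    case True
    then have "u m y * u i p = 0"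
      using assms i m edge_sym[OF im] by (intro mult_eq_0_if_adjacency_differs) auto
    then show ?thesis
      by (metis mult.assoc mult_zero_right)
  next
    case False
    then have "u i j * u m y = 0"
      using assms i m by (intro mult_eq_0_if_adjacency_differs) auto
    then show ?thesis
      by simp
  qed
qed

lemma sandwich_eq_single_term:
  assumes quadrangle: "quadrangle_free E" and im: "E i m" and mk: "E m k"
    and jy: "E j y" and yp: "E y p" and "j \<noteq> p" and "x \<in> V"
  shows "u i j * u k x * u i p = u i j * u m y * u k x * u m y * u i p"
proof -
  have V: "j \<in> V" "y \<in> V" "p \<in> V"
    using jy yp edge_vertices by auto
  have "u i j * u k x * u i p = (\<Sum>y'\<in>V. u i j * u m y' * u k x * u m y' * u i p)"
    by (rule sandwich_diagonal[OF quadrangle im mk V(1) \<open>x \<in> V\<close> V(3)])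
  also have "\<dots> = u i j * u m y * u k x * u m y * u i p"
  proof (rule sum_eq_single[OF finite_vertices V(2)])
    fix y'
    assume "y' \<in> V" "y' \<noteq> y"
    then have "\<not> (E j y' \<and> E y' p)"
      using quadrangle \<open>j \<noteq> p\<close> jy yp edge_sym unfolding quadrangle_free_def by metis
    then show "u i j * u m y' * u k x * u m y' * u i p = 0"
      using sandwich_term_zero_unless_common_neighbour[OF im V(1) \<open>y' \<in> V\<close> V(3)] by blast
  qed
  finally show ?thesis .
qed

lemma sandwich_term_zero_at_ends:
  assumes quadrangle: "quadrangle_free E" and "i \<noteq> k"
    and im: "E i m" and mk: "E m k" and jy: "E j y" and yp: "E y p"
  shows "u i j * u m y * u k j * u m y * u i p = 0"
    and "u i j * u m y * u k p * u m y * u i p = 0"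
proof -
  have i: "i \<in> V" and k: "k \<in> V" and V: "j \<in> V" "y \<in> V" "p \<in> V"
    using im mk jy yp edge_vertices by auto
  have "u i j * u m y = u m y * u i j"
    using commute_adjacent[OF quadrangle im V(1) V(2)] .
  then have "u i j * u m y * u k j * u m y * u i p = u m y * (u i j * u k j) * u m y * u i p"
    by (simp add: mult.assoc)
  then show "u i j * u m y * u k j * u m y * u i p = 0"
    using column_orthogonal[OF i k V(1) \<open>i \<noteq> k\<close>] by simp
  have "u m y * u i p = u i p * u m y"
    using commute_adjacent[OF quadrangle edge_sym[OF im] V(2) V(3)] .
  then have "u i j * u m y * u k p * u m y * u i p = u i j * u m y * (u k p * u i p) * u m y"
    by (simp add: mult.assoc)
  then show "u i j * u m y * u k p * u m y * u i p = 0"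
    using column_orthogonal[OF k i V(3)] \<open>i \<noteq> k\<close> by simp
qed

lemma sandwich_term_zero_distance_2:
  assumes quadrangle: "quadrangle_free E" and "cubic V E" and "i \<noteq> k"
    and im: "E i m" and mk: "E m k" and jy: "E j y" and yp: "E y p" and "j \<noteq> p" and "x \<in> V"
  shows "u i j * u m y * u k x * u m y * u i p = 0"
proof -
  define D where "D x' = u i j * u m y * u k x' * u m y * u i p" for x'
  have i: "i \<in> V" and m: "m \<in> V" and k: "k \<in> V" and V: "j \<in> V" "y \<in> V" "p \<in> V"
    using im mk jy yp edge_vertices by auto
  have "(\<Sum>x'\<in>V. D x') = (\<Sum>x'\<in>V. u i j * u k x' * u i p)"
    unfolding D_def using sandwich_eq_single_term[OF quadrangle im mk jy yp \<open>j \<noteq> p\<close>] by simp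
  also have "\<dots> = u i j * u i p"
    by (rule insert_row_sum[OF k, symmetric])
  also have "\<dots> = 0"
    using row_orthogonal i V \<open>j \<noteq> p\<close> by simp
  finally have total: "(\<Sum>x'\<in>V. D x') = 0" .
  have "{j, p} \<subseteq> {z. E y z}"
    using jy yp edge_sym by blast
  then have "card ({z. E y z} - {j, p}) = 1"
    using \<open>cubic V E\<close> V(2) \<open>j \<noteq> p\<close> unfolding cubic_def by (simp add: card_Diff_subset)
  then obtain x3 where x3: "{z. E y z} - {j, p} = {x3}"
    by (rule card_1_singletonE)
  then have "x3 \<in> V"
    using edge_vertices by blast
  have D_other: "D x' = 0" if "x' \<in> V" "x' \<noteq> x3" for x'
  proof (cases "E y x'")
    case True
    then have "x' = j \<or> x' = p"
      using x3 that(2) by blast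
    then show ?thesis
      unfolding D_def using sandwich_term_zero_at_ends[OF quadrangle \<open>i \<noteq> k\<close> im mk jy yp] by blast
  next
    case False
    then have "u m y * u k x' = 0"
      using that m k V(2) mk by (intro mult_eq_0_if_adjacency_differs) auto
    then show ?thesis
      unfolding D_def by (metis mult.assoc mult_zero_left mult_zero_right)
  qed
  then have "D x3 = 0"
    using total sum_eq_single[OF finite_vertices \<open>x3 \<in> V\<close>, of D] by simp
  then show ?thesis
    using D_other[OF \<open>x \<in> V\<close>] unfolding D_def by metis
qed

lemma sandwich_zero_distance_2:
  assumes quadrangle: "quadrangle_free E" and "cubic V E"
    and "i \<noteq> k" and im: "E i m" and mk: "E m k"
    and V: "j \<in> V" "x \<in> V" "p \<in> V" and "j \<noteq> p"
  shows "u i j * u k x * u i p = 0"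
proof (cases "\<exists>y. E j y \<and> E y p")
  case True
  then obtain y where "E j y" "E y p"
    by blast
  then show ?thesis
    using sandwich_eq_single_term[OF quadrangle im mk] sandwich_term_zero_distance_2[OF assms(1-5)]
      \<open>j \<noteq> p\<close> V(2) by simp
next
  case False
  have "u i j * u k x * u i p = (\<Sum>y\<in>V. u i j * u m y * u k x * u m y * u i p)"
    by (rule sandwich_diagonal[OF quadrangle im mk V])
  also have "\<dots> = 0"
    using False sandwich_term_zero_unless_common_neighbour[OF im V(1) _ V(3)] by (simp add: sum.neutral)
  finally show ?thesis .
qed

lemma commute_distance_2:
  assumes "quadrangle_free E" "cubic V E" "i \<noteq> k" "E i m" "E m k" "j \<in> V" "l \<in> V"
  shows "u i j * u k l = u k l * u i j"
proof (rule commute_if_sandwich_zero)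
  show "i \<in> V" "j \<in> V" "st (u k l) = u k l"
    using assms edge_vertices projection_entry unfolding projection_def by auto
  show "u i j * u k l * u i p = 0" if "p \<in> V" "p \<noteq> j" for p
    using sandwich_zero_distance_2 assms that by metis
qed

end

theorem lemma5p3:
  fixes V :: "'v set" and E :: "'v \<Rightarrow> 'v \<Rightarrow> bool"
    and sc :: "complex \<Rightarrow> 'a::ring_1 \<Rightarrow> 'a" and nm :: "'a \<Rightarrow> real" and st :: "'a \<Rightarrow> 'a"
    and u :: "'v \<Rightarrow> 'v \<Rightarrow> 'a"
  assumes "distance_regular V E" and "cubic V E" and "card V \<ge> 10"
    and "cstar_algebra sc nm st"
    and "qaut_rel V E st u"
    and "i \<in> V" "j \<in> V" "k \<in> V" "l \<in> V"
    and "gdist E i k = gdist E j l" and "gdist E i k \<le> 2"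
  shows "u i j * u k l = u k l * u i j"
proof -
  obtain b c where "cubic_distance_regular_graph V E b c"
    using assms(1,2) unfolding distance_regular_def cubic_distance_regular_graph_def
      distance_regular_graph_def distance_regular_graph_axioms_def connected_simple_graph_def
      connected_simple_graph_axioms_def finite_simple_graph_def cubic_distance_regular_graph_axioms_def
    by blast
  then interpret cubic_distance_regular_graph V E b c .
  interpret quantum_automorphisms sc nm st V E u
    using assms(4,5) by unfold_locales
  have quadrangle: "quadrangle_free E"
    using quadrangle_free_if_card_gt_8 assms(3) by simp
  consider "gdist E i k = 0" | "gdist E i k = 1" | "gdist E i k = 2"
    using assms(11) by linarith
  then show ?thesis
  proof cases
    case 1
    then show ?thesis
      using gdist_eq_0_iff[OF assms(6,8)] gdist_eq_0_iff[OF assms(7,9)] assms(10) by simp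
  next
    case 2
    then show ?thesis
      using commute_adjacent[OF quadrangle] gdist_eq_1_iff assms(6-9) by blast
  next
    case 3
    then show ?thesis
      using commute_distance_2[OF quadrangle assms(2)] gdist_eq_2_iff assms(6-9) by blast
  qed
qed

end
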